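(* Let $(S,\mathcal{S})$ be a measurable space with $\Delta\in\mathcal{S}\otimes\mathcal{S}$ and let $\pi$ be a constructive cr-set. Then there exists $F\in\mathcal{S}$ such that (i) $\pi\cap F$ possesses a version that is $\sigma$-finite on $\mathcal{S}$, and (ii) for all $A\in\mathcal{S}$, either $P((\pi\cap F^{c})\cap A\neq \emptyset)=0$ or $P(|(\pi\cap F^{c})\cap A|=\infty)>0$. Moreover, if two sets $F_{1},F_{2}\in\mathcal{S}$ both satisfy (i) and (ii), then $P(\pi\cap (F_{1}\triangle F_{2})\neq \emptyset)=0$.
   Context: $\Delta=\{(x,x)\mid x\in S\}$. $(\Omega,\mathcal{F},P)$ is a probability space; $C(S)$ is the set of countable subsets of $S$; $N_A(M)=|A\cap M|$; $\mathcal{C}(\mathcal{S})=\sigma(N_A\mid A\in\mathcal{S})$; a cr-set is an $\mathcal{F}$-$\mathcal{C}(\mathcal{S})$ measurable map $\Omega\to C(S)$, finite if its values are finite sets. A map $\tau:\Omega\to C(S)$ is constructive if $\tau(\omega)=\bigcup_k\pi_k(\omega)$ for all $\omega$ for some finite cr-sets $\pi_k$, $k\in\mathbb{N}$. For $A\in\mathcal{S}$, $\pi\cap A$ denotes the cr-set $\omega\mapsto\pi(\omega)\cap A$. A version of a cr-set $\pi$ is a cr-set $\pi'$ with $\pi'(\omega)=\pi(\omega)$ for all $\omega$ outside a $P$-null set in $\mathcal{F}$. A map $\tau$ is $\sigma$-finite on $\mathcal{S}$ if there are $A_n\in\mathcal{S}$ with $S=\bigcup_nA_n$ and $|\tau(\omega)\cap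 A_n|<\infty$ for all $\omega$ and $n$. *)

theory Defs
  imports "HOL-Probability.Probability"
begin

definition countable_subsets :: "'a measure \<Rightarrow> 'a set set" where
  "countable_subsets M = {X. X \<subseteq> space M \<and> countable X}"

definition Ncount :: "'a set \<Rightarrow> 'a set \<Rightarrow> enat" where
  "Ncount A X = (if finite (A \<inter> X) then enat (card (A \<inter> X)) else \<infinity>)"

text \<open>The measurable space (C(S), \<C>(\<S>)), where \<C>(\<S>) is the smallest sigma-algebra
  on C(S) making every N_A (A in \<S>) measurable into the discrete space of extended
  naturals; since that codomain is countable, it is generated by the sets
  {X. N_A X = k}.\<close>
definition cr_space :: "'a measure \<Rightarrow> 'a set measure" where
  "cr_space M = sigma (countable_subsets M)
     {{X \<in> countable_subsets M. Ncount A X = k} | A k. A \<in> sets M}"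

definition cr_set :: "'b measure \<Rightarrow> 'a measure \<Rightarrow> ('b \<Rightarrow> 'a set) \<Rightarrow> bool" where
  "cr_set P M \<pi> \<longleftrightarrow> \<pi> \<in> measurable P (cr_space M)"

definition finite_cr_set :: "'b measure \<Rightarrow> 'a measure \<Rightarrow> ('b \<Rightarrow> 'a set) \<Rightarrow> bool" where
  "finite_cr_set P M \<pi> \<longleftrightarrow> cr_set P M \<pi> \<and> (\<forall>\<omega>\<in>space P. finite (\<pi> \<omega>))"

definition constructive :: "'b measure \<Rightarrow> 'a measure \<Rightarrow> ('b \<Rightarrow> 'a set) \<Rightarrow> bool" where
  "constructive P M \<tau> \<longleftrightarrow> (\<exists>\<pi>s :: nat \<Rightarrow> 'b \<Rightarrow> 'a set.
      (\<forall>k. finite_cr_set P M (\<pi>s k)) \<and> (\<forall>\<omega>\<in>space P. \<tau> \<omega> = (\<Union>k. \<pi>s k \<omega>)))"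

definition is_version :: "'b measure \<Rightarrow> 'a measure \<Rightarrow> ('b \<Rightarrow> 'a set) \<Rightarrow> ('b \<Rightarrow> 'a set) \<Rightarrow> bool" where
  "is_version P M \<pi> \<pi>' \<longleftrightarrow> cr_set P M \<pi>' \<and>
     (\<exists>N\<in>null_sets P. \<forall>\<omega>\<in>space P - N. \<pi>' \<omega> = \<pi> \<omega>)"

definition sigma_finite_on :: "'b measure \<Rightarrow> 'a measure \<Rightarrow> ('b \<Rightarrow> 'a set) \<Rightarrow> bool" where
  "sigma_finite_on P M \<tau> \<longleftrightarrow> (\<exists>A :: nat \<Rightarrow> 'a set. (\<forall>n. A n \<in> sets M) \<and>
      (\<Union>n. A n) = space M \<and> (\<forall>\<omega>\<in>space P. \<forall>n. finite (\<tau> \<omega> \<inter> A n)))"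

definition good_set :: "'b measure \<Rightarrow> 'a measure \<Rightarrow> ('b \<Rightarrow> 'a set) \<Rightarrow> 'a set \<Rightarrow> bool" where
  "good_set P M \<pi> F \<longleftrightarrow>
     (\<exists>\<pi>'. is_version P M (\<lambda>\<omega>. \<pi> \<omega> \<inter> F) \<pi>' \<and> sigma_finite_on P M \<pi>') \<and>
     (\<forall>A\<in>sets M.
        measure P {\<omega>\<in>space P. (\<pi> \<omega> \<inter> (space M - F)) \<inter> A \<noteq> {}} = 0 \<or>
        measure P {\<omega>\<in>space P. infinite ((\<pi> \<omega> \<inter> (space M - F)) \<inter> A)} > 0)"

end

theory Submission
  imports Defs
begin

(*
  Call A in S a.s. locally finite for pi if pi meets A in infinitely many points only
  on a P-null event. Condition (i) for F says precisely that F is a countable union of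
  a.s. locally finite sets; condition (ii) says that pi a.s. misses every a.s. locally
  finite set disjoint from F. Uniqueness follows at once: F1 - F2 is a countable union
  of a.s. locally finite sets disjoint from F2, hence a.s. missed by pi.

  For existence, write pi as the union of finite cr-sets pi_k and weigh a set B by
  nu(B) = sum_k 2^-k E[|B \<inter> pi_k| / (1 + |pi_k|)]. This weight is finite, additive
  on disjoint sets, monotone, and vanishes only if pi a.s. misses B. Taking F of
  maximal weight among countable unions of a.s. locally finite sets gives (i), and
  maximality forces nu(D) = 0, hence (ii), for every a.s. locally finite D outside F.
*)

lemma cr_space_generators:
  "{{X \<in> countable_subsets M. Ncount A X = k} | A k. A \<in> sets M} \<subseteq> Pow (countable_subsets M)"
  by auto

lemma space_cr_space: "space (cr_space M) = countable_subsets M"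
  unfolding cr_space_def by (rule space_measure_of[OF cr_space_generators])

lemma sets_cr_space:
  "sets (cr_space M) = sigma_sets (countable_subsets M)
     {{X \<in> countable_subsets M. Ncount A X = k} | A k. A \<in> sets M}"
  unfolding cr_space_def by (rule sets_measure_of[OF cr_space_generators])

lemma cr_set_values:
  assumes "cr_set P M \<sigma>" "\<omega> \<in> space P"
  shows "\<sigma> \<omega> \<subseteq> space M" "countable (\<sigma> \<omega>)"
proof -
  have "\<sigma> \<omega> \<in> space (cr_space M)"
    using assms unfolding cr_set_def by (meson measurable_space)
  then show "\<sigma> \<omega> \<subseteq> space M" "countable (\<sigma> \<omega>)"
    by (auto simp: space_cr_space countable_subsets_def)
qed

lemma Ncount_measurable:
  assumes "cr_set P M \<sigma>" "A \<in> sets M"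
  shows "(\<lambda>\<omega>. Ncount A (\<sigma> \<omega>)) \<in> measurable P (count_space UNIV)"
  unfolding measurable_count_space_eq2_countable
proof (intro conjI ballI)
  fix k
  have "{X \<in> countable_subsets M. Ncount A X = k} \<in> sets (cr_space M)"
    unfolding sets_cr_space using assms(2) by (intro sigma_sets.Basic) blast
  then have "\<sigma> -` {X \<in> countable_subsets M. Ncount A X = k} \<inter> space P \<in> sets P"
    using assms(1) unfolding cr_set_def by (rule measurable_sets[rotated])
  moreover have "\<sigma> -` {X \<in> countable_subsets M. Ncount A X = k} \<inter> space P
      = (\<lambda>\<omega>. Ncount A (\<sigma> \<omega>)) -` {k} \<inter> space P"
    using cr_set_values[OF assms(1)] by (auto simp: countable_subsets_def)
  ultimately show "(\<lambda>\<omega>. Ncount A (\<sigma> \<omega>)) -` {k} \<inter> space P \<in> sets P" by simp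
qed auto

lemma Ncount_pair_measurable:
  assumes "cr_set P M \<sigma>" "A \<in> sets M" "B \<in> sets M"
  shows "(\<lambda>\<omega>. (Ncount A (\<sigma> \<omega>), Ncount B (\<sigma> \<omega>))) \<in> measurable P (count_space UNIV)"
  unfolding measurable_count_space_eq2_countable
proof (intro conjI ballI)
  fix k :: "enat \<times> enat"
  have "(\<lambda>\<omega>. (Ncount A (\<sigma> \<omega>), Ncount B (\<sigma> \<omega>))) -` {k} \<inter> space P
     = ((\<lambda>\<omega>. Ncount A (\<sigma> \<omega>)) -` {fst k} \<inter> space P) \<inter> ((\<lambda>\<omega>. Ncount B (\<sigma> \<omega>)) -` {snd k} \<inter> space P)"
    by (cases k) auto
  also have "\<dots> \<in> sets P"
    using Ncount_measurable[OF assms(1,2)] Ncount_measurable[OF assms(1,3)]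
    by (intro sets.Int measurable_sets) auto
  finally show "(\<lambda>\<omega>. (Ncount A (\<sigma> \<omega>), Ncount B (\<sigma> \<omega>))) -` {k} \<inter> space P \<in> sets P" .
qed auto

lemma Ncount_event:
  assumes "cr_set P M \<sigma>" "A \<in> sets M"
  shows "{\<omega>\<in>space P. Q (Ncount A (\<sigma> \<omega>))} \<in> sets P"
proof -
  have "(\<lambda>\<omega>. Ncount A (\<sigma> \<omega>)) -` {x. Q x} \<inter> space P \<in> sets P"
    using Ncount_measurable[OF assms] by (rule measurable_sets) auto
  then show ?thesis by (simp add: vimage_def Int_def conj_commute)
qed

lemma Ncount_eq_0_iff: "Ncount A X = 0 \<longleftrightarrow> X \<inter> A = {}"
  by (auto simp: Ncount_def zero_enat_def Int_commute)

lemma Ncount_eq_infinity_iff: "Ncount A X = \<infinity> \<longleftrightarrow> infinite (X \<inter> A)"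
  by (auto simp: Ncount_def Int_commute)

lemma hit_event:
  assumes "cr_set P M \<sigma>" "A \<in> sets M"
  shows "{\<omega>\<in>space P. \<sigma> \<omega> \<inter> A \<noteq> {}} \<in> sets P"
  using Ncount_event[OF assms, of "\<lambda>n. n \<noteq> 0"]
  by (simp add: Ncount_eq_0_iff)

lemma infinite_event:
  assumes "cr_set P M \<sigma>" "A \<in> sets M"
  shows "{\<omega>\<in>space P. infinite (\<sigma> \<omega> \<inter> A)} \<in> sets P"
  using Ncount_event[OF assms, of "\<lambda>n. n = \<infinity>"]
  by (simp add: Ncount_eq_infinity_iff)

(* Restricting a cr-set to a measurable set gives a cr-set: N_A(X \<inter> G) = N_(A \<inter> G)(X). *)
lemma cr_set_Int:
  assumes "cr_set P M \<sigma>" "G \<in> sets M"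
  shows "cr_set P M (\<lambda>\<omega>. \<sigma> \<omega> \<inter> G)"
  unfolding cr_set_def
proof (rule measurable_sigma_sets[OF sets_cr_space cr_space_generators])
  show "(\<lambda>\<omega>. \<sigma> \<omega> \<inter> G) \<in> space P \<rightarrow> countable_subsets M"
    using cr_set_values[OF assms(1)] by (auto simp: countable_subsets_def intro: countable_subset)
  fix y assume "y \<in> {{X \<in> countable_subsets M. Ncount A X = k} | A k. A \<in> sets M}"
  then obtain A k where y: "y = {X \<in> countable_subsets M. Ncount A X = k}" "A \<in> sets M" by blast
  have "Ncount A (X \<inter> G) = Ncount (A \<inter> G) X" for X
    by (simp add: Ncount_def Int_assoc Int_commute Int_left_commute)
  then have "(\<lambda>\<omega>. \<sigma> \<omega> \<inter> G) -` y \<inter> space P = {\<omega>\<in>space P. Ncount (A \<inter> G) (\<sigma> \<omega>) = k}"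
    using cr_set_values[OF assms(1)]
    by (auto simp: y countable_subsets_def intro: countable_subset)
  also have "\<dots> \<in> sets P" using assms y by (intro Ncount_event) auto
  finally show "(\<lambda>\<omega>. \<sigma> \<omega> \<inter> G) -` y \<inter> space P \<in> sets P" .
qed

lemma cr_set_erase:
  assumes "cr_set P M \<sigma>" "N \<in> sets P"
  shows "cr_set P M (\<lambda>\<omega>. if \<omega> \<in> N then {} else \<sigma> \<omega>)"
  unfolding cr_set_def
proof (rule measurable_If_set)
  show "(\<lambda>\<omega>. {}) \<in> measurable P (cr_space M)"
    by (rule measurable_const) (auto simp: space_cr_space countable_subsets_def)
qed (use assms in \<open>auto simp: cr_set_def\<close>)

definition as_finite_sets :: "'b measure \<Rightarrow> 'a measure \<Rightarrow> ('b \<Rightarrow> 'a set) \<Rightarrow> 'a set set" where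
  "as_finite_sets P M \<pi> = {A \<in> sets M. {\<omega>\<in>space P. infinite (\<pi> \<omega> \<inter> A)} \<in> null_sets P}"

lemma as_finite_setsI:
  assumes "cr_set P M \<pi>" "A \<in> sets M" "B \<in> as_finite_sets P M \<pi>" "A \<subseteq> B"
  shows "A \<in> as_finite_sets P M \<pi>"
proof -
  have "{\<omega>\<in>space P. infinite (\<pi> \<omega> \<inter> A)} \<subseteq> {\<omega>\<in>space P. infinite (\<pi> \<omega> \<inter> B)}"
    using assms(4) by (auto dest: finite_subset[rotated, of _ "\<pi> _ \<inter> A"])
  moreover have "{\<omega>\<in>space P. infinite (\<pi> \<omega> \<inter> B)} \<in> null_sets P"
    using assms(3) by (simp add: as_finite_sets_def)
  ultimately have "{\<omega>\<in>space P. infinite (\<pi> \<omega> \<inter> A)} \<in> null_sets P"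
    using null_sets_subset infinite_event[OF assms(1,2)] by blast
  then show ?thesis using assms(2) by (simp add: as_finite_sets_def)
qed

lemma null_event_iff:
  assumes "prob_space P" "E \<in> sets P"
  shows "E \<in> null_sets P \<longleftrightarrow> measure P E = 0"
  using assms by (simp add: null_sets_def finite_measure.emeasure_eq_measure prob_space.axioms(1))

(* Condition (i) for F: if pi \<inter> F has a sigma-finite version, then F is a countable
   union of a.s. locally finite sets (intersect F with the sets of the finiteness cover). *)
lemma sigma_finite_version_cover:
  assumes cr: "cr_set P M \<pi>" and F: "F \<in> sets M"
    and ver: "is_version P M (\<lambda>\<omega>. \<pi> \<omega> \<inter> F) \<pi>'" and sf: "sigma_finite_on P M \<pi>'"
  shows "\<exists>A. (\<forall>n::nat. A n \<in> as_finite_sets P M \<pi>) \<and> F = (\<Union>n. A n)"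
proof -
  obtain N where N: "N \<in> null_sets P" and eq: "\<forall>\<omega>\<in>space P - N. \<pi>' \<omega> = \<pi> \<omega> \<inter> F"
    using ver unfolding is_version_def by (elim conjE bexE)
  obtain C :: "nat \<Rightarrow> _" where C: "\<forall>n. C n \<in> sets M" "(\<Union>n. C n) = space M"
    and fin: "\<forall>\<omega>\<in>space P. \<forall>n. finite (\<pi>' \<omega> \<inter> C n)"
    using sf unfolding sigma_finite_on_def by (elim exE conjE)
  have "F \<inter> C n \<in> as_finite_sets P M \<pi>" for n
  proof -
    have "{\<omega>\<in>space P. infinite (\<pi> \<omega> \<inter> (F \<inter> C n))} \<subseteq> N"
    proof (intro subsetI, rule ccontr)
      fix \<omega> assume \<omega>: "\<omega> \<in> {\<omega>\<in>space P. infinite (\<pi> \<omega> \<inter> (F \<inter> C n))}" "\<omega> \<notin> N"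
      then have "\<pi> \<omega> \<inter> (F \<inter> C n) = \<pi>' \<omega> \<inter> C n" using eq by (simp add: Int_assoc)
      then show False using \<omega> fin by auto
    qed
    then have "{\<omega>\<in>space P. infinite (\<pi> \<omega> \<inter> (F \<inter> C n))} \<in> null_sets P"
      using null_sets_subset[OF N infinite_event[OF cr]] F C(1) by blast
    then show ?thesis using F C(1) by (simp add: as_finite_sets_def)
  qed
  moreover have "F = (\<Union>n. F \<inter> C n)"
    using C(2) sets.sets_into_space[OF F] by blast
  ultimately show ?thesis by (intro exI[of _ "\<lambda>n. F \<inter> C n"]) simp
qed

(* Condition (ii) for F: pi a.s. misses every a.s. locally finite set outside F, since
   for such sets the second alternative of (ii) is impossible. *)
lemma good_set_avoids_as_finite:
  assumes P: "prob_space P" and cr: "cr_set P M \<pi>" and good: "good_set P M \<pi> F"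
    and D: "D \<in> as_finite_sets P M \<pi>" "D \<inter> F = {}"
  shows "{\<omega>\<in>space P. \<pi> \<omega> \<inter> D \<noteq> {}} \<in> null_sets P"
proof -
  have DM: "D \<in> sets M" using D by (simp add: as_finite_sets_def)
  have restrict: "\<pi> \<omega> \<inter> (space M - F) \<inter> D = \<pi> \<omega> \<inter> D" for \<omega>
    using D(2) sets.sets_into_space[OF DM] by blast
  have "measure P {\<omega>\<in>space P. infinite (\<pi> \<omega> \<inter> D)} = 0"
    using D by (simp add: as_finite_sets_def measure_def null_setsD1)
  moreover have "measure P {\<omega>\<in>space P. \<pi> \<omega> \<inter> (space M - F) \<inter> D \<noteq> {}} = 0 \<or>
      measure P {\<omega>\<in>space P. infinite (\<pi> \<omega> \<inter> (space M - F) \<inter> D)} > 0"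
    using good DM unfolding good_set_def by blast
  ultimately have "measure P {\<omega>\<in>space P. \<pi> \<omega> \<inter> D \<noteq> {}} = 0"
    unfolding restrict by simp
  then show ?thesis
    using null_event_iff[OF P hit_event[OF cr DM]] by simp
qed

(* Uniqueness: F1 - F2 is a countable union of a.s. locally finite sets outside F2,
   so pi a.s. misses it. *)
lemma good_sets_difference_null:
  assumes P: "prob_space P" and cr: "cr_set P M \<pi>"
    and F: "F1 \<in> sets M" "F2 \<in> sets M" and good: "good_set P M \<pi> F1" "good_set P M \<pi> F2"
  shows "{\<omega>\<in>space P. \<pi> \<omega> \<inter> (F1 - F2) \<noteq> {}} \<in> null_sets P"
proof -
  obtain \<pi>' where "is_version P M (\<lambda>\<omega>. \<pi> \<omega> \<inter> F1) \<pi>'" "sigma_finite_on P M \<pi>'"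
    using good(1) unfolding good_set_def by blast
  then obtain A where A: "\<And>n::nat. A n \<in> as_finite_sets P M \<pi>" and F1_eq: "F1 = (\<Union>n. A n)"
    using sigma_finite_version_cover[OF cr F(1)] by blast
  have AM: "A n \<in> sets M" for n using A by (simp add: as_finite_sets_def)
  have "A n - F2 \<in> as_finite_sets P M \<pi>" for n
    using AM F(2) by (intro as_finite_setsI[OF cr _ A]) auto
  then have "{\<omega>\<in>space P. \<pi> \<omega> \<inter> (A n - F2) \<noteq> {}} \<in> null_sets P" for n
    by (rule good_set_avoids_as_finite[OF P cr good(2)]) blast
  then have "(\<Union>n. {\<omega>\<in>space P. \<pi> \<omega> \<inter> (A n - F2) \<noteq> {}}) \<in> null_sets P"
    by (rule null_sets_UN)
  moreover have "{\<omega>\<in>space P. \<pi> \<omega> \<inter> (F1 - F2) \<noteq> {}} = (\<Union>n. {\<omega>\<in>space P. \<pi> \<omega> \<inter> (A n - F2) \<noteq> {}})"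
    unfolding F1_eq by blast
  ultimately show ?thesis by simp
qed

definition countable_unions :: "'a set set \<Rightarrow> 'a set set" where
  "countable_unions \<G> = {\<Union>\<A> | \<A>. countable \<A> \<and> \<A> \<subseteq> \<G>}"

lemma countable_unions_UN:
  assumes "\<And>i::nat. X i \<in> countable_unions \<G>"
  shows "(\<Union>i. X i) \<in> countable_unions \<G>"
proof -
  have "\<forall>i. \<exists>\<A>. X i = \<Union>\<A> \<and> countable \<A> \<and> \<A> \<subseteq> \<G>"
    using assms unfolding countable_unions_def by blast
  then obtain \<A> where \<A>: "\<And>i. X i = \<Union>(\<A> i)" "\<And>i. countable (\<A> i)" "\<And>i. \<A> i \<subseteq> \<G>"
    by metis
  have "(\<Union>i. X i) = \<Union>(\<Union>i. \<A> i)" using \<A>(1) by blast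
  moreover have "countable (\<Union>i. \<A> i)" using \<A>(2) by (intro countable_UN) auto
  ultimately show ?thesis using \<A>(3) unfolding countable_unions_def by blast
qed

lemma countable_unions_insert:
  assumes "X \<in> countable_unions \<G>" "Y \<in> \<G>"
  shows "X \<union> Y \<in> countable_unions \<G>"
proof -
  obtain \<A> where "X = \<Union>\<A>" "countable \<A>" "\<A> \<subseteq> \<G>"
    using assms(1) unfolding countable_unions_def by blast
  then have "X \<union> Y = \<Union>(insert Y \<A>)" "countable (insert Y \<A>)" "insert Y \<A> \<subseteq> \<G>"
    using assms(2) by auto
  then show ?thesis unfolding countable_unions_def by blast
qed

(* A monotone ennreal-valued set function attains its supremum on any nonempty family
   closed under countable unions: take the union of a maximising sequence. *)
lemma exists_maximiser:
  fixes \<nu> :: "'a set \<Rightarrow> ennreal"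
  assumes "K \<noteq> {}" and K_UN: "\<And>X. (\<And>i::nat. X i \<in> K) \<Longrightarrow> (\<Union>i. X i) \<in> K"
    and mono: "\<And>X Y. X \<subseteq> Y \<Longrightarrow> \<nu> X \<le> \<nu> Y"
  shows "\<exists>F\<in>K. \<forall>Y\<in>K. \<nu> Y \<le> \<nu> F"
proof -
  obtain f :: "nat \<Rightarrow> ennreal" where f: "range f \<subseteq> \<nu> ` K" "Sup (\<nu> ` K) = (SUP i. f i)"
    using ennreal_Sup_countable_SUP[of "\<nu> ` K"] \<open>K \<noteq> {}\<close> by blast
  then have "\<forall>i. \<exists>X. X \<in> K \<and> f i = \<nu> X" by blast
  then obtain X where X: "\<And>i. X i \<in> K" "\<And>i. f i = \<nu> (X i)"
    by (auto dest!: choice)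
  have "(\<Union>i. X i) \<in> K" using X(1) by (rule K_UN)
  moreover have "\<nu> Y \<le> \<nu> (\<Union>i. X i)" if "Y \<in> K" for Y
  proof -
    have "\<nu> Y \<le> Sup (\<nu> ` K)" using that by (intro Sup_upper) blast
    also have "\<dots> = (SUP i. f i)" by (rule f(2))
    also have "\<dots> \<le> \<nu> (\<Union>i. X i)" unfolding X(2) by (intro SUP_least mono) blast
    finally show ?thesis .
  qed
  ultimately show ?thesis by blast
qed

(* Conversely to sigma_finite_version_cover: if F is a countable union of a.s. locally
   finite sets, erasing pi on the null event where one of them carries infinitely many
   points gives a version of pi \<inter> F which is sigma-finite, with cover (F^c, the pieces). *)
lemma countable_union_version:
  assumes cr: "cr_set P M \<pi>" and \<A>: "countable \<A>" "\<A> \<subseteq> as_finite_sets P M \<pi>"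
  defines "F \<equiv> \<Union>\<A>"
  shows "\<exists>\<pi>'. is_version P M (\<lambda>\<omega>. \<pi> \<omega> \<inter> F) \<pi>' \<and> sigma_finite_on P M \<pi>'"
proof -
  have \<A>_sets: "\<A> \<subseteq> sets M" using \<A>(2) by (auto simp: as_finite_sets_def)
  have FM: "F \<in> sets M" unfolding F_def using \<A> \<A>_sets by (intro sets.countable_Union) auto
  define N where "N = (\<Union>A\<in>\<A>. {\<omega>\<in>space P. infinite (\<pi> \<omega> \<inter> A)})"
  have N: "N \<in> null_sets P"
    unfolding N_def using \<A> by (intro null_sets_UN') (auto simp: as_finite_sets_def)
  define \<pi>' where "\<pi>' \<omega> = (if \<omega> \<in> N then {} else \<pi> \<omega> \<inter> F)" for \<omega>
  have "is_version P M (\<lambda>\<omega>. \<pi> \<omega> \<inter> F) \<pi>'"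
    unfolding is_version_def
  proof (intro conjI bexI)
    show "cr_set P M \<pi>'"
      unfolding \<pi>'_def using N by (intro cr_set_erase cr_set_Int cr FM) auto
  qed (use N in \<open>auto simp: \<pi>'_def\<close>)
  moreover have "sigma_finite_on P M \<pi>'"
    unfolding sigma_finite_on_def
  proof (intro exI conjI allI ballI)
    let ?C = "insert (space M - F) \<A>"
    have C: "?C \<noteq> {}" "countable ?C" using \<A>(1) by auto
    have "?C \<subseteq> sets M" using \<A>_sets FM by auto
    then show "from_nat_into ?C n \<in> sets M" for n
      using from_nat_into[OF C(1)] by blast
    show "(\<Union>n. from_nat_into ?C n) = space M"
      unfolding range_from_nat_into[OF C] using \<A>_sets sets.sets_into_space by (auto simp: F_def)
    show "finite (\<pi>' \<omega> \<inter> from_nat_into ?C n)" if "\<omega> \<in> space P" for \<omega> n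
    proof (cases "\<omega> \<in> N")
      case False
      have fin: "finite (\<pi> \<omega> \<inter> A)" if "A \<in> \<A>" for A
        using False \<open>\<omega> \<in> space P\<close> that unfolding N_def by blast
      have "from_nat_into ?C n \<in> ?C" using from_nat_into[OF C(1)] .
      then consider "from_nat_into ?C n = space M - F" | "from_nat_into ?C n \<in> \<A>" by blast
      then show ?thesis
      proof cases
        case 1
        then show ?thesis using False by (simp add: \<pi>'_def Int_assoc)
      next
        case 2
        have "\<pi>' \<omega> \<inter> from_nat_into ?C n \<subseteq> \<pi> \<omega> \<inter> from_nat_into ?C n"
          using False by (auto simp: \<pi>'_def)
        then show ?thesis using fin[OF 2] by (rule finite_subset)
      qed
    qed (simp add: \<pi>'_def)
  qed
  ultimately show ?thesis by blast
qed

(* The proportion of the points of a finite set X lying in B, damped by 1/(1 + |X|)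
   so that it is additive and monotone in B, bounded by 1 and zero iff X misses B. *)
definition share :: "'a set \<Rightarrow> 'a set \<Rightarrow> real" where
  "share B X = real (card (B \<inter> X)) / (1 + real (card X))"

lemma share_nonneg: "0 \<le> share B X"
  by (simp add: share_def)

lemma share_Un_disjoint:
  assumes "finite X" "B \<inter> C = {}"
  shows "share (B \<union> C) X = share B X + share C X"
proof -
  have "(B \<union> C) \<inter> X = (B \<inter> X) \<union> (C \<inter> X)" by blast
  then have "card ((B \<union> C) \<inter> X) = card (B \<inter> X) + card (C \<inter> X)"
    using assms by (simp add: card_Un_disjoint disjoint_iff)
  then show ?thesis by (simp add: share_def add_divide_distrib)
qed

lemma share_mono:
  assumes "finite X" "B \<subseteq> C"
  shows "share B X \<le> share C X"
proof -
  have "card (B \<inter> X) \<le> card (C \<inter> X)" using assms by (intro card_mono) auto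
  then show ?thesis by (simp add: share_def divide_right_mono)
qed

lemma share_le_1:
  assumes "finite X"
  shows "share B X \<le> 1"
proof -
  have "card (B \<inter> X) \<le> card X" using assms by (intro card_mono) auto
  then show ?thesis by (simp add: share_def)
qed

lemma share_eq_0_iff:
  assumes "finite X"
  shows "share B X = 0 \<longleftrightarrow> B \<inter> X = {}"
  using assms by (simp add: share_def add_nonneg_eq_0_iff)

lemma share_measurable:
  assumes fin: "finite_cr_set P M \<sigma>" and B: "B \<in> sets M"
  shows "(\<lambda>\<omega>. share B (\<sigma> \<omega>)) \<in> borel_measurable P"
proof -
  have cr: "cr_set P M \<sigma>" using fin by (simp add: finite_cr_set_def)
  let ?g = "\<lambda>(a, b). real (the_enat a) / (1 + real (the_enat b))"
  have "(\<lambda>\<omega>. ?g (Ncount B (\<sigma> \<omega>), Ncount (space M) (\<sigma> \<omega>))) \<in> borel_measurable P"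
    by (rule measurable_compose[OF Ncount_pair_measurable[OF cr B sets.top]]) simp
  moreover have "?g (Ncount B (\<sigma> \<omega>), Ncount (space M) (\<sigma> \<omega>)) = share B (\<sigma> \<omega>)"
    if "\<omega> \<in> space P" for \<omega>
  proof -
    have "finite (\<sigma> \<omega>)" "space M \<inter> \<sigma> \<omega> = \<sigma> \<omega>"
      using fin cr_set_values[OF cr that] that by (auto simp: finite_cr_set_def)
    then show ?thesis by (simp add: Ncount_def share_def)
  qed
  ultimately show ?thesis by (simp cong: measurable_cong)
qed

definition hit_weight :: "'b measure \<Rightarrow> (nat \<Rightarrow> 'b \<Rightarrow> 'a set) \<Rightarrow> 'a set \<Rightarrow> ennreal" where
  "hit_weight P \<pi>s B = (\<Sum>k. \<integral>\<^sup>+\<omega>. ennreal ((1/2)^k * share B (\<pi>s k \<omega>)) \<partial>P)"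

context
  fixes P :: "'b measure" and M :: "'a measure" and \<pi>s :: "nat \<Rightarrow> 'b \<Rightarrow> 'a set"
  assumes pieces: "\<And>k. finite_cr_set P M (\<pi>s k)"
begin

lemma pieces_finite: "\<omega> \<in> space P \<Longrightarrow> finite (\<pi>s k \<omega>)"
  using pieces by (simp add: finite_cr_set_def)

lemma weighted_share_measurable:
  assumes "B \<in> sets M"
  shows "(\<lambda>\<omega>. ennreal ((1/2)^k * share B (\<pi>s k \<omega>))) \<in> borel_measurable P"
proof -
  note share_measurable[OF pieces assms, measurable]
  show ?thesis by measurable
qed

lemma hit_weight_Un_disjoint:
  assumes "B \<in> sets M" "C \<in> sets M" "B \<inter> C = {}"
  shows "hit_weight P \<pi>s (B \<union> C) = hit_weight P \<pi>s B + hit_weight P \<pi>s C"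
proof -
  have "(\<integral>\<^sup>+\<omega>. ennreal ((1/2)^k * share (B \<union> C) (\<pi>s k \<omega>)) \<partial>P)
      = (\<integral>\<^sup>+\<omega>. ennreal ((1/2)^k * share B (\<pi>s k \<omega>)) + ennreal ((1/2)^k * share C (\<pi>s k \<omega>)) \<partial>P)"
    for k
    using assms(3) pieces_finite
    by (intro nn_integral_cong)
       (simp add: share_Un_disjoint distrib_left share_nonneg flip: ennreal_plus)
  also have "\<dots> k = (\<integral>\<^sup>+\<omega>. ennreal ((1/2)^k * share B (\<pi>s k \<omega>)) \<partial>P)
      + (\<integral>\<^sup>+\<omega>. ennreal ((1/2)^k * share C (\<pi>s k \<omega>)) \<partial>P)" for k
    using assms(1,2) by (intro nn_integral_add) (simp_all add: weighted_share_measurable)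
  finally show ?thesis
    unfolding hit_weight_def by (simp add: suminf_add[symmetric] summableI)
qed

lemma hit_weight_mono:
  assumes "B \<subseteq> C"
  shows "hit_weight P \<pi>s B \<le> hit_weight P \<pi>s C"
  unfolding hit_weight_def using assms pieces_finite
  by (intro suminf_le summableI nn_integral_mono ennreal_leI mult_left_mono share_mono) auto

lemma hit_weight_finite:
  assumes "prob_space P"
  shows "hit_weight P \<pi>s B < \<infinity>"
proof -
  have "(\<integral>\<^sup>+\<omega>. ennreal ((1/2)^k * share B (\<pi>s k \<omega>)) \<partial>P) \<le> (\<integral>\<^sup>+\<omega>. ennreal ((1/2)^k) \<partial>P)" for k
    using pieces_finite by (intro nn_integral_mono ennreal_leI mult_left_le share_le_1) auto
  also have "\<dots> k = ennreal ((1/2)^k)" for k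
    using assms by (simp add: prob_space.emeasure_space_1)
  finally have "hit_weight P \<pi>s B \<le> (\<Sum>k. ennreal ((1/2)^k))"
    unfolding hit_weight_def by (intro suminf_le summableI)
  also have "\<dots> = ennreal (\<Sum>k. (1/2)^k)"
    by (rule suminf_ennreal2) auto
  finally show ?thesis using order.strict_trans1 by fastforce
qed

lemma hit_weight_eq_0:
  assumes "B \<in> sets M" "hit_weight P \<pi>s B = 0"
  shows "AE \<omega> in P. \<forall>k. \<pi>s k \<omega> \<inter> B = {}"
proof -
  have "(\<integral>\<^sup>+\<omega>. ennreal ((1/2)^k * share B (\<pi>s k \<omega>)) \<partial>P) = 0" for k
  proof -
    have "(\<Sum>j\<in>{k}. \<integral>\<^sup>+\<omega>. ennreal ((1/2)^j * share B (\<pi>s j \<omega>)) \<partial>P) \<le> hit_weight P \<pi>s B"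
      unfolding hit_weight_def by (intro sum_le_suminf summableI) auto
    then show ?thesis using assms(2) by simp
  qed
  then have "AE \<omega> in P. ennreal ((1/2)^k * share B (\<pi>s k \<omega>)) = 0" for k
    using assms(1) by (subst nn_integral_0_iff_AE[symmetric]) (simp_all add: weighted_share_measurable)
  then have "AE \<omega> in P. \<forall>k. ennreal ((1/2)^k * share B (\<pi>s k \<omega>)) = 0"
    by (simp add: AE_all_countable)
  with AE_space show ?thesis
  proof eventually_elim
    case (elim \<omega>)
    show ?case
    proof
      fix k
      have "(1/2)^k * share B (\<pi>s k \<omega>) \<le> 0"
        using elim by (simp add: ennreal_eq_0_iff)
      then have "share B (\<pi>s k \<omega>) = 0"
        using share_nonneg[of B "\<pi>s k \<omega>"] by (smt (verit) mult_pos_pos zero_less_power zero_less_divide_1_iff)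
      then show "\<pi>s k \<omega> \<inter> B = {}"
        using share_eq_0_iff[OF pieces_finite[OF elim(1)]] by blast
    qed
  qed
qed

end

(* The key step of the existence proof: if F has maximal weight nu among countable unions
   of a.s. locally finite sets, and D is an a.s. locally finite set outside F, then
   F \<union> D is again such a union, so nu D = 0 by maximality and additivity, and pi a.s.
   misses D. *)
lemma maximal_union_avoids_as_finite:
  assumes P: "prob_space P" and cr: "cr_set P M \<pi>"
    and pieces: "\<And>k. finite_cr_set P M (\<pi>s k)"
    and \<pi>_eq: "\<forall>\<omega>\<in>space P. \<pi> \<omega> = (\<Union>k. \<pi>s k \<omega>)"
    and FK: "F \<in> countable_unions (as_finite_sets P M \<pi>)"
    and F_max: "\<forall>Y\<in>countable_unions (as_finite_sets P M \<pi>). hit_weight P \<pi>s Y \<le> hit_weight P \<pi>s F"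
    and D: "D \<in> as_finite_sets P M \<pi>" "D \<inter> F = {}"
  shows "{\<omega>\<in>space P. \<pi> \<omega> \<inter> D \<noteq> {}} \<in> null_sets P"
proof -
  let ?\<nu> = "hit_weight P \<pi>s"
  have DM: "D \<in> sets M" using D(1) by (simp add: as_finite_sets_def)
  have FM: "F \<in> sets M"
    using FK by (auto simp: countable_unions_def as_finite_sets_def intro!: sets.countable_Union)
  have "?\<nu> F + ?\<nu> D = ?\<nu> (F \<union> D)"
    using FM DM D(2) by (intro hit_weight_Un_disjoint[OF pieces, symmetric]) auto
  also have "\<dots> \<le> ?\<nu> F + 0"
    using bspec[OF F_max countable_unions_insert[OF FK D(1)]] by simp
  finally have "?\<nu> F + ?\<nu> D \<le> ?\<nu> F + 0" .
  moreover have "?\<nu> F < \<infinity>" by (rule hit_weight_finite[OF pieces P])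
  ultimately have "?\<nu> D = 0" by (auto simp: ennreal_add_left_cancel_le)
  then have "AE \<omega> in P. \<forall>k. \<pi>s k \<omega> \<inter> D = {}"
    by (rule hit_weight_eq_0[OF pieces DM])
  with AE_space have "AE \<omega> in P. \<pi> \<omega> \<inter> D = {}"
    by eventually_elim (use \<pi>_eq in blast)
  then show ?thesis
    using AE_iff_null[OF hit_event[OF cr DM]] by simp
qed

(* Existence: a countable union F of a.s. locally finite sets of maximal weight satisfies
   (i) by countable_union_version, and (ii) because for A in S either pi \<inter> F^c \<inter> A is
   infinite with positive probability, or F^c \<inter> A is a.s. locally finite and hence a.s.
   missed by pi. *)
lemma exists_good_set:
  assumes P: "prob_space P" and cr: "cr_set P M \<pi>" and con: "constructive P M \<pi>"
  shows "\<exists>F\<in>sets M. good_set P M \<pi> F"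
proof -
  obtain \<pi>s :: "nat \<Rightarrow> _" where pieces: "\<forall>k. finite_cr_set P M (\<pi>s k)"
    and \<pi>_eq: "\<forall>\<omega>\<in>space P. \<pi> \<omega> = (\<Union>k. \<pi>s k \<omega>)"
    using con unfolding constructive_def by (elim exE conjE)
  let ?\<G> = "as_finite_sets P M \<pi>"
  have "{} \<in> countable_unions ?\<G>"
    unfolding countable_unions_def by (intro CollectI exI[of _ "{}"]) simp
  then have "\<exists>F\<in>countable_unions ?\<G>. \<forall>Y\<in>countable_unions ?\<G>. hit_weight P \<pi>s Y \<le> hit_weight P \<pi>s F"
    using pieces by (intro exists_maximiser countable_unions_UN hit_weight_mono) auto
  then obtain F where FK: "F \<in> countable_unions ?\<G>"
    and F_max: "\<forall>Y\<in>countable_unions ?\<G>. hit_weight P \<pi>s Y \<le> hit_weight P \<pi>s F" ..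
  obtain \<A> where \<A>: "countable \<A>" "\<A> \<subseteq> ?\<G>" and F_eq: "F = \<Union>\<A>"
    using FK unfolding countable_unions_def by blast
  have FM: "F \<in> sets M"
    unfolding F_eq using \<A> by (intro sets.countable_Union) (auto simp: as_finite_sets_def)
  have sigma_finite_part: "\<exists>\<pi>'. is_version P M (\<lambda>\<omega>. \<pi> \<omega> \<inter> F) \<pi>' \<and> sigma_finite_on P M \<pi>'"
    unfolding F_eq by (rule countable_union_version[OF cr \<A>])
  have dichotomy: "measure P {\<omega>\<in>space P. \<pi> \<omega> \<inter> (space M - F) \<inter> A \<noteq> {}} = 0 \<or>
      measure P {\<omega>\<in>space P. infinite (\<pi> \<omega> \<inter> (space M - F) \<inter> A)} > 0"
    if A: "A \<in> sets M" for A
  proof (cases "measure P {\<omega>\<in>space P. infinite (\<pi> \<omega> \<inter> (space M - F) \<inter> A)} > 0")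
    case False
    define D where "D = (space M - F) \<inter> A"
    have DM: "D \<in> sets M" unfolding D_def using FM A by auto
    have restrict: "\<pi> \<omega> \<inter> (space M - F) \<inter> A = \<pi> \<omega> \<inter> D" for \<omega>
      by (simp add: D_def Int_assoc)
    have "measure P {\<omega>\<in>space P. infinite (\<pi> \<omega> \<inter> D)} = 0"
      using False measure_nonneg[of P] unfolding restrict by (simp add: not_less order.antisym)
    then have "D \<in> ?\<G>"
      using DM null_event_iff[OF P infinite_event[OF cr DM]] by (simp add: as_finite_sets_def)
    then have "{\<omega>\<in>space P. \<pi> \<omega> \<inter> D \<noteq> {}} \<in> null_sets P"
      using pieces by (intro maximal_union_avoids_as_finite[OF P cr _ \<pi>_eq FK F_max]) (auto simp: D_def)
    then show ?thesis
      unfolding restrict using null_event_iff[OF P hit_event[OF cr DM]] by simp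
  qed simp
  show ?thesis
    unfolding good_set_def by (intro bexI[OF _ FM] conjI ballI sigma_finite_part dichotomy)
qed

theorem theorem1p10:
  fixes M :: "'a measure" and P :: "'b measure" and \<pi> :: "'b \<Rightarrow> 'a set"
  assumes "prob_space P"
    and "{(x, x) | x. x \<in> space M} \<in> sets (M \<Otimes>\<^sub>M M)"
    and "cr_set P M \<pi>"
    and "constructive P M \<pi>"
  shows "(\<exists>F\<in>sets M. good_set P M \<pi> F) \<and>
         (\<forall>F1\<in>sets M. \<forall>F2\<in>sets M. good_set P M \<pi> F1 \<and> good_set P M \<pi> F2 \<longrightarrow>
            measure P {\<omega>\<in>space P. \<pi> \<omega> \<inter> ((F1 - F2) \<union> (F2 - F1)) \<noteq> {}} = 0)"
proof (intro conjI ballI impI)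
  show "\<exists>F\<in>sets M. good_set P M \<pi> F"
    by (rule exists_good_set[OF assms(1,3,4)])
next
  fix F1 F2 assume F: "F1 \<in> sets M" "F2 \<in> sets M"
    and good: "good_set P M \<pi> F1 \<and> good_set P M \<pi> F2"
  have "{\<omega>\<in>space P. \<pi> \<omega> \<inter> (F1 - F2) \<noteq> {}} \<union> {\<omega>\<in>space P. \<pi> \<omega> \<inter> (F2 - F1) \<noteq> {}}
      \<in> null_sets P"
    using good by (intro null_sets.Un good_sets_difference_null[OF assms(1,3)] F) auto
  moreover have "{\<omega>\<in>space P. \<pi> \<omega> \<inter> ((F1 - F2) \<union> (F2 - F1)) \<noteq> {}}
      = {\<omega>\<in>space P. \<pi> \<omega> \<inter> (F1 - F2) \<noteq> {}} \<union> {\<omega>\<in>space P. \<pi> \<omega> \<inter> (F2 - F1) \<noteq> {}}"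
    by blast
  ultimately show "measure P {\<omega>\<in>space P. \<pi> \<omega> \<inter> ((F1 - F2) \<union> (F2 - F1)) \<noteq> {}} = 0"
    by (simp add: measure_def null_setsD1)
qed

end
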